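(* Let $A, B \in\mathbb{C}^{n\times n}$ be matrices of index at most $1$. If $A\leq^{GD1}B$, then $A\leq\# B$ (right sharp partial order), i.e. $A^2=BA$ and $R(A^* )\subseteq R(B^* )$.
   Context: For $A\in\mathbb{C}^{n\times n}$, $ind(A)$ is the smallest nonnegative integer $k$ with $\mathrm{rank}(A^k)=\mathrm{rank}(A^{k+1})$. $A\{1\}$ is the set of matrices $X$ with $AXA=A$. With $k=ind(A)$, $A\{GD\}$ is the set of matrices $X$ with $AXA=A$, $XA^{k+1}=A^k$, $A^{k+1}X=A^k$ (G-Drazin inverses). A GD1 inverse of $A$ is a matrix $A^{GD1}=A^{GD}AA^-$ with $A^-\in A\{1\}$, $A^{GD}\in A\{GD\}$. We write $A\leq^{GD1}B$ if $AA^{GD1}=BA^{GD1}$ and $A^{GD1}A=A^{GD1}B$ for some GD1 inverse $A^{GD1}$ of $A$. $A^*$ is the conjugate transpose and $R(\cdot)$ the range. *)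

theory Defs
  imports "HOL-Analysis.Analysis"
begin

type_synonym 'n cmat = "complex^'n^'n"

definition mpow :: "'n::finite cmat \<Rightarrow> nat \<Rightarrow> 'n cmat" where
  "mpow A k = (((**) A) ^^ k) (mat 1)"

definition ind :: "'n::finite cmat \<Rightarrow> nat" where
  "ind A = (LEAST k. rank (mpow A k) = rank (mpow A (Suc k)))"

definition ctrans :: "'n::finite cmat \<Rightarrow> 'n cmat" where
  "ctrans A = (\<chi> i j. cnj (A $ j $ i))"

definition inv1 :: "'n::finite cmat \<Rightarrow> 'n cmat set" where
  "inv1 A = {X. A ** X ** A = A}"

definition invGD :: "'n::finite cmat \<Rightarrow> 'n cmat set" where
  "invGD A = {X. A ** X ** A = A \<and>
                 X ** mpow A (Suc (ind A)) = mpow A (ind A) \<and>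
                 mpow A (Suc (ind A)) ** X = mpow A (ind A)}"

definition invGD1 :: "'n::finite cmat \<Rightarrow> 'n cmat set" where
  "invGD1 A = {G ** A ** M | G M. G \<in> invGD A \<and> M \<in> inv1 A}"

definition GD1_le :: "'n::finite cmat \<Rightarrow> 'n cmat \<Rightarrow> bool" where
  "GD1_le A B = (\<exists>X \<in> invGD1 A. A ** X = B ** X \<and> X ** A = X ** B)"

definition right_sharp_le :: "'n::finite cmat \<Rightarrow> 'n cmat \<Rightarrow> bool" where
  "right_sharp_le A B = (A ** A = B ** A \<and>
      range (\<lambda>x. ctrans A *v x) \<subseteq> range (\<lambda>x. ctrans B *v x))"

end

theory Submission
  imports Defs
begin

text \<open>Write \<open>X = G A M\<close> for the GD1 inverse. Multiplying \<open>A X = B X\<close> on the right by \<open>A\<close>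
  and \<open>X A = X B\<close> on the left by \<open>A\<close> gives \<open>A = B G A\<close> and \<open>A = A M B\<close>, using only
  \<open>A G A = A = A M A\<close>. When \<open>ind A \<le> 1\<close> the G-Drazin inverse satisfies \<open>G A\<^sup>2 = A\<close>, so
  \<open>A\<^sup>2 = B G A\<^sup>2 = B A\<close>; and \<open>A = (A M) B\<close> gives \<open>A\<^sup>* = B\<^sup>* (A M)\<^sup>*\<close>, hence
  \<open>R(A\<^sup>*) \<subseteq> R(B\<^sup>*)\<close>.\<close>

lemma ctrans_matrix_mul: "ctrans (P ** Q) = ctrans Q ** ctrans (P :: 'n::finite cmat)"
  by (simp add: ctrans_def matrix_matrix_mult_def vec_eq_iff mult.commute)

lemma range_ctrans_matrix_mul_subset:
  fixes C B :: "'n::finite cmat"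
  shows "range (\<lambda>x. ctrans (C ** B) *v x) \<subseteq> range (\<lambda>x. ctrans B *v x)"
proof
  fix y assume "y \<in> range (\<lambda>x. ctrans (C ** B) *v x)"
  then obtain x where "y = ctrans (C ** B) *v x" by blast
  then have "y = ctrans B *v (ctrans C *v x)"
    by (simp add: ctrans_matrix_mul matrix_vector_mul_assoc)
  then show "y \<in> range (\<lambda>x. ctrans B *v x)" by blast
qed

lemma invGD_mult_square:
  fixes A G :: "'n::finite cmat"
  assumes "ind A \<le> 1" and "G \<in> invGD A"
  shows "G ** (A ** A) = A"
proof (cases "ind A")
  case 0
  with assms(2) have "G ** A = mat 1"
    by (simp add: invGD_def mpow_def)
  then show ?thesis
    by (metis matrix_mul_assoc matrix_mul_lid)
next
  case (Suc k)
  with assms have "ind A = 1" by simp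
  with assms(2) show ?thesis
    by (simp add: invGD_def mpow_def numeral_2_eq_2 matrix_mul_assoc)
qed

lemma GD1_le_factorizations:
  fixes A B :: "'n::finite cmat"
  assumes "GD1_le A B"
  obtains G M where "G \<in> invGD A" and "A = B ** G ** A" and "A = A ** M ** B"
proof -
  obtain G M where G: "G \<in> invGD A" and M: "M \<in> inv1 A"
    and left: "A ** (G ** A ** M) = B ** (G ** A ** M)"
    and right: "(G ** A ** M) ** A = (G ** A ** M) ** B"
    using assms unfolding GD1_le_def invGD1_def by blast
  have AGA: "A ** G ** A = A" using G by (simp add: invGD_def)
  have AMA: "A ** M ** A = A" using M by (simp add: inv1_def)
  have "A = A ** G ** A ** M ** A"
    using AGA AMA by simp
  also have "\<dots> = B ** G ** A ** M ** A"
    using arg_cong[OF left, of "\<lambda>X. X ** A"] by (simp add: matrix_mul_assoc)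
  also have "\<dots> = B ** G ** A"
    using AMA by (metis matrix_mul_assoc)
  finally have "A = B ** G ** A" .
  moreover have "A = A ** M ** B"
  proof -
    have "A = A ** G ** A ** M ** A"
      using AGA AMA by simp
    also have "\<dots> = A ** G ** A ** M ** B"
      using arg_cong[OF right, of "\<lambda>X. A ** X"] by (simp add: matrix_mul_assoc)
    also have "\<dots> = A ** M ** B"
      using AGA by (metis matrix_mul_assoc)
    finally show ?thesis .
  qed
  ultimately show ?thesis
    using G that by blast
qed

theorem corollary2p13:
  fixes A B :: "complex^'n::finite^'n"
  assumes "ind A \<le> 1" and "ind B \<le> 1"
    and "GD1_le A B"
  shows "right_sharp_le A B"
proof -
  obtain G M where G: "G \<in> invGD A"
    and BGA: "A = B ** G ** A" and AMB: "A = A ** M ** B"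
    using GD1_le_factorizations[OF assms(3)] .
  have "A ** A = B ** (G ** (A ** A))"
    using BGA by (metis matrix_mul_assoc)
  then have "A ** A = B ** A"
    using invGD_mult_square[OF assms(1) G] by simp
  moreover have "range (\<lambda>x. ctrans A *v x) \<subseteq> range (\<lambda>x. ctrans B *v x)"
    using range_ctrans_matrix_mul_subset[of "A ** M" B] AMB by simp
  ultimately show ?thesis
    unfolding right_sharp_le_def by simp
qed

end
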